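(* Let $n\geq2$ be an integer, $b:=-n+i$, $D=\{0,m\}$ with $2\le m\le n^2$. Let $\alpha\in E_{n,D}$ and suppose there is exactly one sequence $(\alpha_j)_{j\ge1}$ with $\alpha_j\in\{0,\pm m\}$ and $\alpha=\sum_{j\ge1}\alpha_jb^{-j}$. Let $\gamma:=\sum_{j\ge1}\gamma_jb^{-j}$ where $\gamma_j:=\min(D\cap(D+\alpha_j))$. Then, with $C(\alpha):=C_{n,D}\cap(C_{n,D}+\alpha)$, $$C(\alpha)-\gamma=\Big\{\sum_{j\ge1}z_jb^{-j}: z_j\in D,\ z_j\le m-|\alpha_j|\text{ for all }j\Big\},$$ and $C(\alpha)-\gamma$ is a subset of $C_{n,D}$.
   Context: $C_{n,D}$ is the attractor of $\{z\mapsto b^{-1}(z+d): d\in D\}$, i.e. $C_{n,D}=\{\sum_{j\ge1}d_jb^{-j}: d_j\in D\}$. $E_{n,D}$ is the attractor of $\{z\mapsto b^{-1}(z+\delta):\delta\in D-D\}$, i.e. $E_{n,D}=\{\sum_{j\ge1}\delta_jb^{-j}:\delta_j\in D-D\}$. $X-\gamma=\{x-\gamma:x\in X\}$. *)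

theory Defs
  imports "HOL-Analysis.Analysis"
begin

definition bbase :: "nat \<Rightarrow> complex" where
  "bbase n = - of_nat n + \<i>"

text \<open>Radix expansion: the digit sequence d is indexed from 0, d j standing for the
  paper's d_(j+1); value = sum over j>=1 of d_j b^(-j).\<close>
definition radix_val :: "complex \<Rightarrow> (nat \<Rightarrow> int) \<Rightarrow> complex" where
  "radix_val b d = (\<Sum>j. of_int (d j) / b ^ Suc j)"

definition Cset :: "complex \<Rightarrow> int set \<Rightarrow> complex set" where
  "Cset b D = {radix_val b d | d. \<forall>j. d j \<in> D}"

definition Eset :: "complex \<Rightarrow> int set \<Rightarrow> complex set" where
  "Eset b D = {radix_val b d | d. \<forall>j. d j \<in> {x - y | x y. x \<in> D \<and> y \<in> D}}"

end

theory Submission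
  imports Defs
begin

text \<open>Two digits of {0, m} differ by 0, m or -m. So if w = \<Sum> c_j b^-j and w - \<alpha> = \<Sum> c'_j b^-j
  with c_j, c'_j \<in> {0, m}, then c - c' is a {0, \<plusminus>m}-expansion of \<alpha>, and uniqueness gives
  c' = c - a. Digitwise, a_j = 0 leaves c_j \<in> {0, m} free while a_j = \<plusminus>m forces
  c_j = max a_j 0 = \<gamma>_j; subtracting \<gamma> therefore leaves exactly the digits z_j \<in> {0, m}
  with z_j \<le> m - |a_j|.\<close>

lemma norm_bbase_gt_one: "n \<ge> 1 \<Longrightarrow> 1 < norm (bbase n)"
proof -
  assume "n \<ge> 1"
  then have "1 < sqrt (real n ^ 2 + 1)"
    by (simp add: real_less_rsqrt)
  then show ?thesis
    by (simp add: bbase_def cmod_def)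
qed

lemma summable_radix_val:
  fixes b :: complex
  assumes b: "1 < norm b" and D: "finite D" "\<forall>j. d j \<in> D"
  shows "summable (\<lambda>j. of_int (d j) / b ^ Suc j)"
proof (rule summable_comparison_test')
  define K where "K = Max (abs ` D)"
  have K: "\<bar>d j\<bar> \<le> K" for j
    using D by (auto simp: K_def intro: Max_ge)
  show "summable (\<lambda>j. (K / norm b) * inverse (norm b) ^ j)"
    using b by (intro summable_mult summable_geometric) (simp add: inverse_less_1_iff)
  fix j :: nat
  have "norm (of_int (d j) / b ^ Suc j) = \<bar>d j\<bar> / norm b ^ Suc j"
    by (simp add: norm_divide norm_mult norm_power)
  also have "\<dots> \<le> K / norm b ^ Suc j"
    using b K[of j] by (intro divide_right_mono) auto
  also have "\<dots> = (K / norm b) * inverse (norm b) ^ j"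
    by (simp add: field_simps)
  finally show "norm (of_int (d j) / b ^ Suc j) \<le> (K / norm b) * inverse (norm b) ^ j" .
qed

lemma radix_val_add:
  fixes b :: complex
  assumes "1 < norm b" "finite D" "\<forall>j. d j \<in> D" "finite E" "\<forall>j. e j \<in> E"
  shows "radix_val b (\<lambda>j. d j + e j) = radix_val b d + radix_val b e"
  unfolding radix_val_def
  using suminf_add[OF summable_radix_val summable_radix_val] assms
  by (simp add: add_divide_distrib)

lemma radix_val_diff:
  fixes b :: complex
  assumes "1 < norm b" "finite D" "\<forall>j. d j \<in> D" "finite E" "\<forall>j. e j \<in> E"
  shows "radix_val b (\<lambda>j. d j - e j) = radix_val b d - radix_val b e"
  unfolding radix_val_def
  using suminf_diff[OF summable_radix_val summable_radix_val] assms
  by (simp add: diff_divide_distrib)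

lemma Min_digits_inter_translate:
  fixes M x :: int
  assumes "0 < M" "x \<in> {0, M, -M}"
  shows "Min ({0, M} \<inter> (\<lambda>y. y + x) ` {0, M}) = max x 0"
  using assms by (auto simp: insert_commute)

lemma digit_pair_iff_shifted_digit:
  fixes M x c :: int
  assumes "0 < M" "x \<in> {0, M, -M}"
  shows "(c \<in> {0, M} \<and> c - x \<in> {0, M}) \<longleftrightarrow> (c - max x 0 \<in> {0, M} \<and> c - max x 0 \<le> M - \<bar>x\<bar>)"
  using assms by auto

lemma mem_Cset_inter_translate_iff:
  fixes b \<alpha> :: complex and M :: int
  assumes b: "1 < norm b"
    and a: "\<forall>j. a j \<in> {0, M, -M}" and \<alpha>: "\<alpha> = radix_val b a"
    and uniq: "\<forall>a'. (\<forall>j. a' j \<in> {0, M, -M}) \<and> \<alpha> = radix_val b a' \<longrightarrow> a' = a"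
  shows "w \<in> Cset b {0, M} \<inter> (\<lambda>z. z + \<alpha>) ` Cset b {0, M}
    \<longleftrightarrow> (\<exists>c. (\<forall>j. c j \<in> {0, M} \<and> c j - a j \<in> {0, M}) \<and> w = radix_val b c)"
proof
  assume "w \<in> Cset b {0, M} \<inter> (\<lambda>z. z + \<alpha>) ` Cset b {0, M}"
  then obtain c c' where c: "\<forall>j. c j \<in> {0, M}" and c': "\<forall>j. c' j \<in> {0, M}"
    and w: "w = radix_val b c" "w = radix_val b c' + \<alpha>"
    unfolding Cset_def by auto
  have diff_digits: "\<forall>j. c j - c' j \<in> {0, M, -M}"
  proof
    fix j
    show "c j - c' j \<in> {0, M, -M}"
      using c[rule_format, of j] c'[rule_format, of j] by auto
  qed
  have "\<alpha> = radix_val b c - radix_val b c'"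
    using w by (metis add_diff_cancel_left')
  also have "\<dots> = radix_val b (\<lambda>j. c j - c' j)"
    using radix_val_diff[OF b _ c _ c'] by simp
  finally have "\<alpha> = radix_val b (\<lambda>j. c j - c' j)" .
  with diff_digits have "(\<lambda>j. c j - c' j) = a"
    by (rule uniq[rule_format, OF conjI])
  then have "c' j = c j - a j" for j
    by (auto dest: fun_cong[of _ _ j])
  then have "\<forall>j. c j \<in> {0, M} \<and> c j - a j \<in> {0, M}"
    using c c' by metis
  then show "\<exists>c. (\<forall>j. c j \<in> {0, M} \<and> c j - a j \<in> {0, M}) \<and> w = radix_val b c"
    using w by blast
next
  assume "\<exists>c. (\<forall>j. c j \<in> {0, M} \<and> c j - a j \<in> {0, M}) \<and> w = radix_val b c"
  then obtain c where c: "\<forall>j. c j \<in> {0, M} \<and> c j - a j \<in> {0, M}" and w: "w = radix_val b c"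
    by blast
  have "w = radix_val b (\<lambda>j. c j - a j) + \<alpha>"
    using w \<alpha> radix_val_diff[OF b _ _ _ a, of "{0, M}" c] c by simp
  moreover have "radix_val b c \<in> Cset b {0, M}" "radix_val b (\<lambda>j. c j - a j) \<in> Cset b {0, M}"
    using c unfolding Cset_def by blast+
  ultimately show "w \<in> Cset b {0, M} \<inter> (\<lambda>z. z + \<alpha>) ` Cset b {0, M}"
    using w by (simp add: rev_image_eqI)
qed

lemma Cset_inter_translate_minus_min_digits:
  fixes b \<alpha> :: complex and M :: int
  assumes b: "1 < norm b" and M: "0 < M"
    and a: "\<forall>j. a j \<in> {0, M, -M}" and \<alpha>: "\<alpha> = radix_val b a"
    and uniq: "\<forall>a'. (\<forall>j. a' j \<in> {0, M, -M}) \<and> \<alpha> = radix_val b a' \<longrightarrow> a' = a"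
  shows "(\<lambda>w. w - radix_val b (\<lambda>j. max (a j) 0)) ` (Cset b {0, M} \<inter> (\<lambda>z. z + \<alpha>) ` Cset b {0, M})
    = {radix_val b z | z. \<forall>j. z j \<in> {0, M} \<and> z j \<le> M - \<bar>a j\<bar>}"
proof -
  define g where "g = (\<lambda>j. max (a j) 0)"
  have g: "\<forall>j. g j \<in> {0, M}"
  proof
    fix j
    show "g j \<in> {0, M}"
      using a[rule_format, of j] M by (auto simp: g_def)
  qed
  have digits: "(c j \<in> {0, M} \<and> c j - a j \<in> {0, M}) \<longleftrightarrow> (c j - g j \<in> {0, M} \<and> c j - g j \<le> M - \<bar>a j\<bar>)"
    for c j
    using digit_pair_iff_shifted_digit[OF M, of "a j" "c j"] a unfolding g_def by blast
  let ?I = "Cset b {0, M} \<inter> (\<lambda>z. z + \<alpha>) ` Cset b {0, M}"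
  note mem_I = mem_Cset_inter_translate_iff[OF b a \<alpha> uniq]
  show ?thesis
    unfolding g_def[symmetric]
  proof (intro set_eqI iffI)
    fix x
    assume "x \<in> (\<lambda>w. w - radix_val b g) ` ?I"
    then obtain w where w: "w \<in> ?I" and x: "x = w - radix_val b g"
      by blast
    from w obtain c where c: "\<forall>j. c j \<in> {0, M} \<and> c j - a j \<in> {0, M}" and "w = radix_val b c"
      unfolding mem_I by blast
    then have "x = radix_val b (\<lambda>j. c j - g j)"
      using x radix_val_diff[OF b _ _ _ g, of "{0, M}" c] by simp
    moreover have "\<forall>j. c j - g j \<in> {0, M} \<and> c j - g j \<le> M - \<bar>a j\<bar>"
      using c digits by blast
    ultimately show "x \<in> {radix_val b z | z. \<forall>j. z j \<in> {0, M} \<and> z j \<le> M - \<bar>a j\<bar>}"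
      by blast
  next
    fix x
    assume "x \<in> {radix_val b z | z. \<forall>j. z j \<in> {0, M} \<and> z j \<le> M - \<bar>a j\<bar>}"
    then obtain z where z: "\<forall>j. z j \<in> {0, M} \<and> z j \<le> M - \<bar>a j\<bar>" and x: "x = radix_val b z"
      by blast
    define c where "c = (\<lambda>j. z j + g j)"
    have "\<forall>j. c j \<in> {0, M} \<and> c j - a j \<in> {0, M}"
    proof
      fix j
      show "c j \<in> {0, M} \<and> c j - a j \<in> {0, M}"
        using digits[of c j] z by (simp add: c_def)
    qed
    then have "radix_val b c \<in> ?I"
      unfolding mem_I by blast
    moreover have "x = radix_val b c - radix_val b g"
      using x z radix_val_add[OF b _ _ _ g, of "{0, M}" z] by (simp add: c_def)
    ultimately show "x \<in> (\<lambda>w. w - radix_val b g) ` ?I"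
      by (rule rev_image_eqI)
  qed
qed

theorem lemma5p6:
  fixes n m :: nat and \<alpha> :: complex and a :: "nat \<Rightarrow> int"
  assumes "n \<ge> 2" and "2 \<le> m" and "m \<le> n ^ 2"
    and "\<alpha> \<in> Eset (bbase n) {0, int m}"
    and "\<forall>j. a j \<in> {0, int m, - int m}" and "\<alpha> = radix_val (bbase n) a"
    and "\<forall>a'. (\<forall>j. a' j \<in> {0, int m, - int m}) \<and> \<alpha> = radix_val (bbase n) a' \<longrightarrow> a' = a"
  shows "(\<lambda>z. z - radix_val (bbase n) (\<lambda>j. Min ({0, int m} \<inter> (\<lambda>x. x + a j) ` {0, int m})))
            ` (Cset (bbase n) {0, int m} \<inter> (\<lambda>z. z + \<alpha>) ` Cset (bbase n) {0, int m})
         = {radix_val (bbase n) z | z. \<forall>j. z j \<in> {0, int m} \<and> z j \<le> int m - \<bar>a j\<bar>}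
       \<and> (\<lambda>z. z - radix_val (bbase n) (\<lambda>j. Min ({0, int m} \<inter> (\<lambda>x. x + a j) ` {0, int m})))
            ` (Cset (bbase n) {0, int m} \<inter> (\<lambda>z. z + \<alpha>) ` Cset (bbase n) {0, int m})
         \<subseteq> Cset (bbase n) {0, int m}"
proof -
  have b: "1 < norm (bbase n)"
    using \<open>n \<ge> 2\<close> by (intro norm_bbase_gt_one) simp
  have M: "0 < int m"
    using \<open>2 \<le> m\<close> by simp
  have \<gamma>: "(\<lambda>j. Min ({0, int m} \<inter> (\<lambda>x. x + a j) ` {0, int m})) = (\<lambda>j. max (a j) 0)"
    using Min_digits_inter_translate[OF M] assms(5) by blast
  have "{radix_val (bbase n) z | z. \<forall>j. z j \<in> {0, int m} \<and> z j \<le> int m - \<bar>a j\<bar>}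
      \<subseteq> Cset (bbase n) {0, int m}"
    unfolding Cset_def by blast
  then show ?thesis
    unfolding \<gamma> using Cset_inter_translate_minus_min_digits[OF b M assms(5-7)] by simp
qed

end
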